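(* Let $\varphi,\psi\in G$ satisfy $\lim_{t\to0+}\psi(t)/\varphi(t)=0$, $\delta_\varphi<1$, and $M(\tilde\varphi)\subset\Lambda(\psi)$. Then the identity inclusion operator $I:M(\tilde\varphi)\to\Lambda(\psi)$ is disjointly strictly singular.
   Context: All functions are Lebesgue measurable on $[0,1]$, and $x^*$ denotes the decreasing left-continuous rearrangement of $|x|$. $G$ denotes the class of all positive increasing concave functions on $(0,1]$. For $\psi\in G$, the Lorentz space $\Lambda(\psi)$ consists of all measurable $x$ with $\|x\|_{\Lambda(\psi)}=\int_0^1 x^*(s)\,d\psi(s)<\infty$. For $\varphi\in G$ put $\tilde\varphi(t)=t/\varphi(t)$; the Marcinkiewicz space $M(\tilde\varphi)$ consists of all measurable $x$ with $\|x\|_{M(\tilde\varphi)}=\sup_{0<t\le1}\frac{1}{\tilde\varphi(t)}\int_0^t x^*(s)\,ds<\infty$. For a positive function $f$ on $(0,1]$, its dilation function is $\mathcal M_f(t)=\sup\{f(st)/f(s):0<s\le\min(1,1/t)\}$ for $t>0$, and its upper dilation index is $\delta_f=\lim_{t\to\infty}\ln\mathcal M_f(t)/\ln t$. A bounded linear operator $T$ from a Banach lattice $X$ into a Banach space $Y$ is disjointly strictly singular (DSS) if there is no sequence of nonzero pairwise disjoint elements $x_n\in X$ such that the restriction of $T$ to their closed linear span $[x_n]$ is an isomorphism (onto its image). *)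

theory Defs
  imports "HOL-Analysis.Analysis"
begin

text \<open>Functions on [0,1] are modelled as real \<Rightarrow> real; only their values on [0,1] matter.
  Norms are ennreal-valued (possibly infinite).\<close>

definition meas01 :: "(real \<Rightarrow> real) \<Rightarrow> bool" where
  "meas01 x \<longleftrightarrow> x \<in> borel_measurable (restrict_space lebesgue {0..1})"

definition distr_fun :: "(real \<Rightarrow> real) \<Rightarrow> ennreal \<Rightarrow> ennreal" where
  "distr_fun x r = emeasure lebesgue {s \<in> {0..1}. r < ennreal \<bar>x s\<bar>}"

text \<open>Decreasing left-continuous rearrangement x*(t) = inf{\<lambda>. d_x(\<lambda>) < t} for t > 0;
  at t = 0 it is the essential supremum of |x|.\<close>
definition rearr :: "(real \<Rightarrow> real) \<Rightarrow> real \<Rightarrow> ennreal" where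
  "rearr x t = (if t \<le> 0 then Inf {r. distr_fun x r = 0}
                else Inf {r. distr_fun x r < ennreal t})"

definition classG :: "(real \<Rightarrow> real) \<Rightarrow> bool" where
  "classG f \<longleftrightarrow> (\<forall>t\<in>{0<..1}. f t > 0) \<and> mono_on {0<..1} f \<and> concave_on {0<..1} f"

text \<open>Distribution function on the real line generating the Lebesgue--Stieltjes measure d\<psi>
  on [0,1] (with \<psi>(0) = 0, so that a possible jump \<psi>(0+) gives an atom at 0).\<close>
definition stieltjes_fun :: "(real \<Rightarrow> real) \<Rightarrow> real \<Rightarrow> real" where
  "stieltjes_fun \<psi> t = (if t < 0 then 0
                        else if t = 0 then Lim (at_right 0) \<psi>
                        else if t \<le> 1 then \<psi> t else \<psi> 1)"

definition lorentz_norm :: "(real \<Rightarrow> real) \<Rightarrow> (real \<Rightarrow> real) \<Rightarrow> ennreal" where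
  "lorentz_norm \<psi> x = (\<integral>\<^sup>+ s. rearr x s \<partial>(interval_measure (stieltjes_fun \<psi>)))"

definition in_lorentz :: "(real \<Rightarrow> real) \<Rightarrow> (real \<Rightarrow> real) \<Rightarrow> bool" where
  "in_lorentz \<psi> x \<longleftrightarrow> meas01 x \<and> lorentz_norm \<psi> x < \<infinity>"

definition tilde :: "(real \<Rightarrow> real) \<Rightarrow> real \<Rightarrow> real" where
  "tilde \<phi> t = t / \<phi> t"

definition marc_norm :: "(real \<Rightarrow> real) \<Rightarrow> (real \<Rightarrow> real) \<Rightarrow> ennreal" where
  "marc_norm \<phi> x = (SUP t\<in>{0<..1}. ennreal (1 / tilde \<phi> t) * (\<integral>\<^sup>+ s\<in>{0..t}. rearr x s \<partial>lborel))"

definition in_marc :: "(real \<Rightarrow> real) \<Rightarrow> (real \<Rightarrow> real) \<Rightarrow> bool" where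
  "in_marc \<phi> x \<longleftrightarrow> meas01 x \<and> marc_norm \<phi> x < \<infinity>"

definition dilation :: "(real \<Rightarrow> real) \<Rightarrow> real \<Rightarrow> real" where
  "dilation f t = Sup {f (s * t) / f s | s. 0 < s \<and> s \<le> min 1 (1 / t)}"

definition upper_dil_index :: "(real \<Rightarrow> real) \<Rightarrow> real" where
  "upper_dil_index f = Lim at_top (\<lambda>t. ln (dilation f t) / ln t)"

definition nonzero01 :: "(real \<Rightarrow> real) \<Rightarrow> bool" where
  "nonzero01 x \<longleftrightarrow> emeasure lebesgue {s \<in> {0..1}. x s \<noteq> 0} \<noteq> 0"

definition disjoint01 :: "(real \<Rightarrow> real) \<Rightarrow> (real \<Rightarrow> real) \<Rightarrow> bool" where
  "disjoint01 x y \<longleftrightarrow> emeasure lebesgue {s \<in> {0..1}. x s \<noteq> 0 \<and> y s \<noteq> 0} = 0"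

definition closed_span_marc :: "(real \<Rightarrow> real) \<Rightarrow> (nat \<Rightarrow> real \<Rightarrow> real) \<Rightarrow> (real \<Rightarrow> real) set" where
  "closed_span_marc \<phi> xs = {y. in_marc \<phi> y \<and>
     (\<forall>\<epsilon>>0. \<exists>N (a::nat \<Rightarrow> real).
        marc_norm \<phi> (\<lambda>s. y s - (\<Sum>i<N. a i * xs i s)) < ennreal \<epsilon>)}"

text \<open>The restriction of the inclusion I : M(\<tilde>\<phi>) \<rightarrow> \<Lambda>(\<psi>) to a subspace Z is an isomorphism
  onto its image: (I is bounded and) bounded below on Z.\<close>
definition incl_iso_on :: "(real \<Rightarrow> real) \<Rightarrow> (real \<Rightarrow> real) \<Rightarrow> (real \<Rightarrow> real) set \<Rightarrow> bool" where
  "incl_iso_on \<phi> \<psi> Z \<longleftrightarrow> (\<exists>c>0. \<forall>y\<in>Z. ennreal c * marc_norm \<phi> y \<le> lorentz_norm \<psi> y)"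

definition incl_DSS :: "(real \<Rightarrow> real) \<Rightarrow> (real \<Rightarrow> real) \<Rightarrow> bool" where
  "incl_DSS \<phi> \<psi> \<longleftrightarrow> \<not> (\<exists>xs :: nat \<Rightarrow> real \<Rightarrow> real.
      (\<forall>n. in_marc \<phi> (xs n) \<and> nonzero01 (xs n)) \<and>
      (\<forall>n m. n \<noteq> m \<longrightarrow> disjoint01 (xs n) (xs m)) \<and>
      incl_iso_on \<phi> \<psi> (closed_span_marc \<phi> xs))"

end

theory Submission
  imports Defs
begin

text \<open>Since \<open>\<delta>\<^sub>\<phi> < 1\<close>, the function \<open>1/\<phi>\<close> belongs to \<open>M(\<tilde>\<phi>)\<close>, hence to \<open>\<Lambda>(\<psi>)\<close>; as
  \<open>(1/\<phi>)\<^sup>* \<ge> 1/\<phi>\<close> this gives \<open>\<integral>\<^sub>0\<^sup>1 d\<psi>/\<phi> < \<infinity>\<close>, so \<open>\<integral>\<^sub>0\<^sup>m d\<psi>/\<phi> \<rightarrow> 0\<close> as \<open>m \<rightarrow> 0\<close>.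
  Every \<open>x \<in> M(\<tilde>\<phi>)\<close> satisfies \<open>x\<^sup>*(u) \<le> \<parallel>x\<parallel>\<^sub>M / \<phi>(u)\<close>, and if \<open>x\<close> is supported on a set of
  measure less than \<open>m\<close> then \<open>x\<^sup>*\<close> vanishes beyond \<open>m\<close>, so
  \<open>\<parallel>x\<parallel>\<^sub>\<Lambda> \<le> \<parallel>x\<parallel>\<^sub>M \<integral>\<^sub>0\<^sup>m d\<psi>/\<phi>\<close>. A sequence of pairwise disjoint elements contains
  elements of arbitrarily small support, so the inclusion is not bounded below on their span.
  The hypothesis \<open>\<psi>/\<phi> \<rightarrow> 0\<close> is only used through \<open>\<psi>(0+) = 0\<close>.\<close>

section \<open>The class G and the dilation function\<close>

lemma classG_pos: "classG f \<Longrightarrow> 0 < t \<Longrightarrow> t \<le> 1 \<Longrightarrow> 0 < f t"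
  by (auto simp: classG_def)

lemma classG_mono: "classG f \<Longrightarrow> 0 < s \<Longrightarrow> s \<le> t \<Longrightarrow> t \<le> 1 \<Longrightarrow> f s \<le> f t"
  unfolding classG_def by (auto intro: mono_onD)

text \<open>Compare \<open>a\<close> with the chord from \<open>e\<close> to \<open>b\<close> and let \<open>e \<rightarrow> 0+\<close>, using \<open>f e > 0\<close>;
  \<open>0\<close> itself is outside the domain of concavity.\<close>
lemma classG_mult_le_mult:
  assumes G: "classG f" and ab: "0 < a" "a \<le> b" "b \<le> 1"
  shows "a * f b \<le> b * f a"
proof -
  have chord: "(a - e) * f b \<le> (b - e) * f a" if e: "0 < e" "e < a" for e
  proof -
    define t where "t = (a - e) / (b - e)"
    have t: "0 \<le> t" "t \<le> 1" and tb: "t * (b - e) = a - e"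
      using ab e by (auto simp: t_def field_simps)
    have "(1 - t) * f e + t * f b \<le> f ((1 - t) *\<^sub>R e + t *\<^sub>R b)"
      using G ab e by (intro concave_onD[OF _ t]) (auto simp: classG_def)
    also have "(1 - t) *\<^sub>R e + t *\<^sub>R b = a"
      using tb by (simp add: algebra_simps)
    finally have "t * f b \<le> f a"
      using classG_pos[OF G, of e] t ab e by (smt (verit) mult_nonneg_nonneg)
    then show ?thesis
      using ab e by (simp add: t_def field_simps)
  qed
  have "((\<lambda>e. (a - e) * f b - (b - e) * f a) \<longlongrightarrow> (a - 0) * f b - (b - 0) * f a) (at_right 0)"
    by (intro tendsto_intros)
  moreover have "eventually (\<lambda>e. (a - e) * f b - (b - e) * f a \<le> 0) (at_right 0)"
    unfolding eventually_at_right_field using ab chord by (intro exI[of _ a]) auto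
  ultimately have "a * f b - b * f a \<le> 0"
    by (intro tendsto_upperbound) auto
  then show ?thesis by simp
qed

lemma classG_dilate_le:
  assumes "classG f" "0 < s" "1 \<le> t" "s * t \<le> 1"
  shows "f (s * t) \<le> t * f s"
proof -
  have "s * f (s * t) \<le> (s * t) * f s"
    using assms by (intro classG_mult_le_mult) (auto simp: mult_le_cancel_left1)
  then show ?thesis
    using assms(2) by (simp add: mult.assoc mult_le_cancel_left_pos)
qed

lemma classG_dilation_quotient_le:
  assumes G: "classG f" and t: "1 < t" and s: "0 < s" "s \<le> 1 / t"
  shows "f (s * t) / f s \<le> t"
proof -
  have "1 / t < 1"
    using t by simp
  then have "s < 1"
    using s by linarith
  then have "f (s * t) \<le> t * f s" "0 < f s"
    using s t by (auto intro: classG_dilate_le[OF G] classG_pos[OF G] simp: field_simps)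
  then show ?thesis
    by (simp add: divide_le_eq)
qed

lemma dilation_le:
  assumes G: "classG f" and t: "1 < t"
  shows "dilation f t \<le> t"
  unfolding dilation_def
  using t classG_dilation_quotient_le[OF G t]
  by (intro cSup_least) (auto intro!: exI[of _ "1 / t"])

lemma dilation_upper:
  assumes G: "classG f" and t: "1 < t" and s: "0 < s" "s \<le> 1 / t"
  shows "f (s * t) \<le> dilation f t * f s"
proof -
  have "f (s * t) / f s \<le> dilation f t"
    unfolding dilation_def using s t classG_dilation_quotient_le[OF G t]
    by (intro cSup_upper bdd_aboveI[of _ t]) auto
  moreover have "1 / t < 1"
    using t by simp
  then have "0 < f s"
    using s by (intro classG_pos[OF G]) auto
  ultimately show ?thesis
    by (simp add: divide_le_eq)
qed

lemma dilation_ge_1: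
  assumes G: "classG f" and t: "1 < t"
  shows "1 \<le> dilation f t"
proof -
  have "f 1 \<le> dilation f t * f (1 / t)"
    using dilation_upper[OF G t, of "1 / t"] t by simp
  moreover have "f (1 / t) \<le> f 1" "0 < f (1 / t)"
    using t by (auto intro: classG_mono[OF G] classG_pos[OF G])
  ultimately show ?thesis
    by (smt (verit) mult_le_cancel_right1)
qed

lemma upper_dil_index_lt_1_imp_dilation_lt:
  assumes G: "classG f" and idx: "upper_dil_index f < 1"
  obtains t where "1 < t" "dilation f t < t"
proof (rule ccontr)
  assume "\<not> thesis"
  with that have eq: "dilation f t = t" if "1 < t" for t
    using dilation_le[OF G that] that by force
  have "eventually (\<lambda>t. ln (dilation f t) / ln t = 1) at_top"
    using eventually_gt_at_top[of "1::real"] by eventually_elim (simp add: eq)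
  then have "((\<lambda>t. ln (dilation f t) / ln t) \<longlongrightarrow> 1) at_top"
    by (rule tendsto_eventually)
  then have "upper_dil_index f = 1"
    unfolding upper_dil_index_def by (intro tendsto_Lim) auto
  with idx show False by simp
qed

lemma classG_dilation_power:
  assumes G: "classG f" and t0: "1 < t0"
  shows "0 < s \<Longrightarrow> s \<le> t \<Longrightarrow> t \<le> 1 \<Longrightarrow> t \<le> t0 ^ n * s \<Longrightarrow> f t \<le> dilation f t0 ^ n * f s"
proof (induction n arbitrary: t)
  case 0
  then show ?case by simp
next
  case (Suc n)
  let ?Q = "dilation f t0"
  have Q: "1 \<le> ?Q"
    by (rule dilation_ge_1[OF G t0])
  have step: "f t \<le> ?Q * f (t / t0)"
    using dilation_upper[OF G t0, of "t / t0"] Suc.prems t0 by (auto simp: field_simps)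
  have "f (t / t0) \<le> ?Q ^ n * f s"
  proof (cases "t / t0 \<le> s")
    case True
    then have "f (t / t0) \<le> f s"
      using Suc.prems t0 by (intro classG_mono[OF G]) auto
    also have "\<dots> \<le> ?Q ^ n * f s"
      using Q classG_pos[OF G, of s] Suc.prems by (simp add: mult_le_cancel_right1)
    finally show ?thesis .
  next
    case False
    then show ?thesis
      using Suc.prems t0 by (intro Suc.IH) (auto simp: field_simps)
  qed
  then show ?case
    using step Q by (smt (verit) mult_left_mono power_Suc mult.assoc)
qed

lemma classG_powr_growth:
  assumes G: "classG f" and idx: "upper_dil_index f < 1"
  obtains C p where "0 < C" "0 \<le> p" "p < 1"
    "\<And>s t. 0 < s \<Longrightarrow> s \<le> t \<Longrightarrow> t \<le> 1 \<Longrightarrow> f t \<le> C * (t / s) powr p * f s"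
proof -
  obtain t0 where t0: "1 < t0" and lt: "dilation f t0 < t0"
    using upper_dil_index_lt_1_imp_dilation_lt[OF G idx] by blast
  define Q where "Q = dilation f t0"
  have Q: "1 \<le> Q"
    unfolding Q_def by (rule dilation_ge_1[OF G t0])
  define p where "p = ln Q / ln t0"
  have p: "0 \<le> p" "p < 1"
    using Q t0 lt by (auto simp: p_def Q_def)
  have "f t \<le> Q * (t / s) powr p * f s" if st: "0 < s" "s \<le> t" "t \<le> 1" for s t
  proof -
    define L where "L = ln (t / s) / ln t0"
    define n where "n = nat \<lceil>L\<rceil>"
    have L: "0 \<le> L" "L \<le> real n" "real n \<le> L + 1"
      using st t0 by (auto simp: L_def n_def)
    have "t / s = t0 powr L"
      using st t0 by (simp add: L_def powr_def)
    also have "\<dots> \<le> t0 ^ n"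
      using L t0 by (simp add: powr_mono flip: powr_realpow)
    finally have "f t \<le> Q ^ n * f s"
      unfolding Q_def using st by (intro classG_dilation_power[OF G t0]) (auto simp: field_simps)
    also have "Q ^ n \<le> Q powr (L + 1)"
      using L Q by (simp add: powr_mono flip: powr_realpow)
    also have "Q powr (L + 1) = Q * Q powr L"
      using Q by (simp add: powr_add)
    also have "Q powr L = (t / s) powr p"
      using Q st by (simp add: powr_def L_def p_def)
    finally show ?thesis
      using classG_pos[OF G, of s] st by (simp add: mult_right_mono)
  qed
  with that[of Q p] Q p show thesis by simp
qed

section \<open>Rearrangements and the Marcinkiewicz norm\<close>

lemma meas01_level_set:
  assumes "meas01 x"
  shows "{s \<in> {0..1}. c < ennreal \<bar>x s\<bar>} \<in> sets lebesgue"
proof -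
  have [measurable]: "x \<in> borel_measurable (restrict_space lebesgue {0..1})"
    using assms by (simp add: meas01_def)
  have "{s \<in> space (restrict_space lebesgue {0..1}). c < ennreal \<bar>x s\<bar>}
      \<in> sets (restrict_space lebesgue {0..1})"
    by measurable
  then show ?thesis
    by (simp add: sets_restrict_space_iff)
qed

lemma distr_fun_le_1: "distr_fun x r \<le> 1"
proof -
  have "distr_fun x r \<le> emeasure lebesgue {0..(1::real)}"
    unfolding distr_fun_def by (rule emeasure_mono) auto
  then show ?thesis by simp
qed

lemma rearr_antimono: "0 < t \<Longrightarrow> t \<le> t' \<Longrightarrow> rearr x t' \<le> rearr x t"
  unfolding rearr_def by (auto intro!: Inf_superset_mono simp: order_less_le_trans)

lemma rearr_le_rearr_0: "0 < t \<Longrightarrow> rearr x t \<le> rearr x 0"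
  unfolding rearr_def by (auto intro!: Inf_superset_mono)

lemma rearr_le: "0 < t \<Longrightarrow> distr_fun x r < ennreal t \<Longrightarrow> rearr x t \<le> r"
  unfolding rearr_def by (auto intro!: Inf_lower)

lemma rearr_ge:
  assumes "0 < t" "\<And>r. r < R \<Longrightarrow> ennreal t \<le> distr_fun x r"
  shows "R \<le> rearr x t"
  unfolding rearr_def using assms by (auto intro!: Inf_greatest) (meson not_le)

lemma rearr_zero: "rearr (\<lambda>s. 0) t = 0"
  unfolding rearr_def distr_fun_def by (simp add: bot_ennreal)

lemma marc_norm_zero: "marc_norm \<phi> (\<lambda>s. 0) = 0"
  unfolding marc_norm_def by (simp add: rearr_zero)

lemma rearr_mult_le_marc_norm:
  assumes G: "classG \<phi>" and u: "0 < u" "u \<le> 1"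
  shows "rearr x u * ennreal (\<phi> u) \<le> marc_norm \<phi> x"
proof -
  have "(\<integral>\<^sup>+ s. rearr x u * indicator {0..u} s \<partial>lborel) \<le> (\<integral>\<^sup>+ s\<in>{0..u}. rearr x s \<partial>lborel)"
    using u rearr_antimono[of _ u x] rearr_le_rearr_0[of u x]
    by (intro nn_integral_mono) (auto simp: indicator_def le_less)
  then have avg: "rearr x u * ennreal u \<le> (\<integral>\<^sup>+ s\<in>{0..u}. rearr x s \<partial>lborel)"
    using u by (simp add: nn_integral_cmult_indicator)
  have "ennreal (1 / tilde \<phi> u) * ennreal u = ennreal (\<phi> u)"
    using u classG_pos[OF G u] by (simp add: tilde_def flip: ennreal_mult'')
  then have "rearr x u * ennreal (\<phi> u) = ennreal (1 / tilde \<phi> u) * (rearr x u * ennreal u)"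
    by (metis mult.commute mult.left_commute)
  also have "\<dots> \<le> ennreal (1 / tilde \<phi> u) * (\<integral>\<^sup>+ s\<in>{0..u}. rearr x s \<partial>lborel)"
    by (intro mult_left_mono avg) simp
  also have "\<dots> \<le> marc_norm \<phi> x"
    unfolding marc_norm_def using u by (intro SUP_upper) auto
  finally show ?thesis .
qed

lemma rearr_le_marc_norm:
  assumes G: "classG \<phi>" and u: "0 < u" "u \<le> 1"
  shows "rearr x u \<le> marc_norm \<phi> x * ennreal (1 / \<phi> u)"
proof -
  have "rearr x u = rearr x u * ennreal (\<phi> u) * ennreal (1 / \<phi> u)"
    using classG_pos[OF G u] by (simp add: mult.assoc flip: ennreal_mult')
  also have "\<dots> \<le> marc_norm \<phi> x * ennreal (1 / \<phi> u)"
    by (intro mult_right_mono rearr_mult_le_marc_norm[OF G u]) simp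
  finally show ?thesis .
qed

lemma rearr_pos_if_nonzero01:
  assumes meas: "meas01 x" and nz: "nonzero01 x"
  obtains u where "0 < u" "u \<le> 1" "0 < rearr x u"
proof -
  define T where "T k = {s \<in> {0..1}. ennreal (1 / Suc k) < ennreal \<bar>x s\<bar>}" for k :: nat
  have T: "T k \<in> sets lebesgue" for k
    unfolding T_def by (rule meas01_level_set[OF meas])
  have "(\<Union>k. T k) = {s \<in> {0..1}. x s \<noteq> 0}"
  proof (intro set_eqI iffI)
    fix s assume "s \<in> {s \<in> {0..1}. x s \<noteq> 0}"
    then have s: "s \<in> {0..1}" "0 < \<bar>x s\<bar>" by auto
    obtain k where "inverse (real (Suc k)) < \<bar>x s\<bar>"
      using reals_Archimedean[OF s(2)] by blast
    then show "s \<in> (\<Union>k. T k)"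
      using s by (auto simp: T_def inverse_eq_divide intro!: ennreal_lessI)
  qed (auto simp: T_def)
  then have "(\<Union>k. T k) \<notin> null_sets lebesgue"
    using nz by (simp add: nonzero01_def null_sets_def)
  then obtain k where k: "emeasure lebesgue (T k) \<noteq> 0"
    using T null_sets_UN[of T lebesgue] by (auto simp: null_sets_def)
  define r where "r = (1 / Suc k :: real)"
  define u where "u = enn2real (distr_fun x (ennreal r))"
  have d: "distr_fun x (ennreal r) = emeasure lebesgue (T k)"
    by (simp add: distr_fun_def T_def r_def)
  have ud: "ennreal u = distr_fun x (ennreal r)"
    using distr_fun_le_1[of x "ennreal r"] by (simp add: u_def ennreal_enn2real_if) (metis ennreal_one_less_top leD)
  have "ennreal u \<noteq> 0" "ennreal u \<le> 1"
    using ud d k distr_fun_le_1[of x "ennreal r"] by auto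
  then have u: "0 < u" "u \<le> 1"
    by (auto simp: u_def enn2real_nonneg less_le)
  have "ennreal r \<le> rearr x u"
  proof (rule rearr_ge[OF u(1)])
    fix r' assume "r' < ennreal r"
    then show "ennreal u \<le> distr_fun x r'"
      unfolding ud distr_fun_def by (intro emeasure_mono meas01_level_set[OF meas]) auto
  qed
  then have "0 < rearr x u"
    by (rule order.strict_trans2[rotated]) (simp add: r_def)
  with u that show thesis by blast
qed

lemma marc_norm_pos:
  assumes G: "classG \<phi>" and meas: "meas01 x" and nz: "nonzero01 x"
  shows "0 < marc_norm \<phi> x"
proof -
  obtain u where u: "0 < u" "u \<le> 1" "0 < rearr x u"
    using rearr_pos_if_nonzero01[OF meas nz] by blast
  then have "0 < rearr x u * ennreal (\<phi> u)"
    using classG_pos[OF G u(1,2)] by (simp add: ennreal_zero_less_mult_iff)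
  also have "\<dots> \<le> marc_norm \<phi> x"
    by (rule rearr_mult_le_marc_norm[OF G u(1,2)])
  finally show ?thesis .
qed

section \<open>The Lebesgue--Stieltjes measure \<open>d\<psi>\<close>\<close>

lemma classG_tendsto_0:
  assumes G: "classG \<phi>" and H: "classG \<psi>"
    and lim: "((\<lambda>t. \<psi> t / \<phi> t) \<longlongrightarrow> 0) (at_right 0)"
  shows "(\<psi> \<longlongrightarrow> 0) (at_right 0)"
proof (rule tendsto_sandwich[where f = "\<lambda>_. 0" and h = "\<lambda>t. \<psi> t / \<phi> t * \<phi> 1"])
  have ev: "eventually (\<lambda>t. 0 < t \<and> t \<le> 1) (at_right (0::real))"
    unfolding eventually_at_right_field by (intro exI[of _ 1]) auto
  then show "eventually (\<lambda>t. 0 \<le> \<psi> t) (at_right 0)"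
    by eventually_elim (auto intro: less_imp_le classG_pos[OF H])
  show "eventually (\<lambda>t. \<psi> t \<le> \<psi> t / \<phi> t * \<phi> 1) (at_right 0)"
    using ev
  proof eventually_elim
    case (elim t)
    then have "\<psi> t / \<phi> t * \<phi> t \<le> \<psi> t / \<phi> t * \<phi> 1"
      using classG_pos[OF G] classG_pos[OF H] classG_mono[OF G]
      by (intro mult_left_mono) (auto intro: less_imp_le)
    then show ?case
      using classG_pos[OF G, of t] elim by simp
  qed
  show "((\<lambda>t. \<psi> t / \<phi> t * \<phi> 1) \<longlongrightarrow> 0) (at_right 0)"
    using tendsto_mult_right[OF lim, of "\<phi> 1"] by simp
qed auto

lemma stieltjes_fun_eq:
  assumes "(\<psi> \<longlongrightarrow> 0) (at_right 0)"
  shows "stieltjes_fun \<psi> t = (if t \<le> 0 then 0 else if t \<le> 1 then \<psi> t else \<psi> 1)"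
  using tendsto_Lim[OF _ assms] by (simp add: stieltjes_fun_def)

lemma stieltjes_fun_mono:
  assumes H: "classG \<psi>" and lim: "(\<psi> \<longlongrightarrow> 0) (at_right 0)" and "a \<le> b"
  shows "stieltjes_fun \<psi> a \<le> stieltjes_fun \<psi> b"
  unfolding stieltjes_fun_eq[OF lim]
  using \<open>a \<le> b\<close> classG_pos[OF H] classG_mono[OF H] by (auto intro: less_imp_le)

lemma classG_isCont:
  assumes H: "classG \<psi>" and a: "0 < a" "a < 1"
  shows "isCont \<psi> a"
proof -
  have "convex_on {0<..1} (\<lambda>x. - \<psi> x)"
    using H by (simp add: classG_def concave_on_def)
  then have "convex_on {0<..<1} (\<lambda>x. - \<psi> x)"
    by (rule convex_on_subset) auto
  then have "continuous_on {0<..<1} (\<lambda>x. - \<psi> x)"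
    by (rule convex_on_continuous[rotated]) auto
  then have "continuous_on {0<..<1} \<psi>"
    using continuous_on_minus by fastforce
  then show ?thesis
    using a by (simp add: continuous_on_eq_continuous_at)
qed

lemma stieltjes_fun_continuous_right:
  assumes H: "classG \<psi>" and lim: "(\<psi> \<longlongrightarrow> 0) (at_right 0)"
  shows "continuous (at_right a) (stieltjes_fun \<psi>)"
  unfolding continuous_within
proof -
  let ?F = "stieltjes_fun \<psi>"
  note F = stieltjes_fun_eq[OF lim]
  have locally_eq: "(?F \<longlongrightarrow> l) (at_right a)"
    if "(g \<longlongrightarrow> l) (at_right a)" "a < b" "\<And>y. a < y \<Longrightarrow> y < b \<Longrightarrow> g y = ?F y" for g l b
  proof -
    have "eventually (\<lambda>y. g y = ?F y) (at_right a)"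
      unfolding eventually_at_right_field using that(2,3) by blast
    then show ?thesis
      using that(1) by (rule Lim_transform_eventually[rotated])
  qed
  consider "a < 0" | "a = 0" | "0 < a" "a < 1" | "1 \<le> a"
    by linarith
  then show "(?F \<longlongrightarrow> ?F a) (at_right a)"
  proof cases
    case 1
    then show ?thesis
      by (intro locally_eq[of "\<lambda>_. 0" _ 0]) (simp_all add: F)
  next
    case 2
    then show ?thesis
      using lim by (intro locally_eq[of \<psi> _ 1]) (simp_all add: F)
  next
    case 3
    then have "(\<psi> \<longlongrightarrow> \<psi> a) (at_right a)"
      using classG_isCont[OF H] by (simp add: isCont_def filterlim_at_split)
    then show ?thesis
      using 3 by (intro locally_eq[of \<psi> _ 1]) (simp_all add: F)
  next
    case 4
    then show ?thesis
      by (intro locally_eq[of "\<lambda>_. \<psi> 1" _ "a + 1"]) (simp_all add: F)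
  qed
qed

lemma emeasure_stieltjes_Ioc:
  assumes H: "classG \<psi>" and lim: "(\<psi> \<longlongrightarrow> 0) (at_right 0)" and "a \<le> b"
  shows "emeasure (interval_measure (stieltjes_fun \<psi>)) {a<..b}
    = ennreal (stieltjes_fun \<psi> b - stieltjes_fun \<psi> a)"
  by (rule emeasure_interval_measure_Ioc[OF \<open>a \<le> b\<close>])
    (use stieltjes_fun_mono[OF H lim] stieltjes_fun_continuous_right[OF H lim] in auto)

text \<open>\<open>rearr x 0\<close> is the essential supremum of \<open>x\<close>, which may be infinite; it is the
  condition \<open>\<psi>(0+) = 0\<close> that keeps this value out of the Lorentz norm.\<close>
lemma AE_stieltjes_pos:
  assumes H: "classG \<psi>" and lim: "(\<psi> \<longlongrightarrow> 0) (at_right 0)"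
  shows "AE u in interval_measure (stieltjes_fun \<psi>). 0 < u"
proof -
  let ?M = "interval_measure (stieltjes_fun \<psi>)"
  have "{- real n<..0} \<in> null_sets ?M" for n
    using emeasure_stieltjes_Ioc[OF H lim, of "- real n" 0]
    by (simp add: null_sets_def stieltjes_fun_eq[OF lim])
  then have "(\<Union>n. {- real n<..0}) \<in> null_sets ?M"
    by (rule null_sets_UN)
  also have "(\<Union>n. {- real n<..0}) = {..0::real}"
  proof (intro set_eqI iffI)
    fix x :: real assume "x \<in> {..0}"
    moreover obtain n :: nat where "- x < real n"
      using reals_Archimedean2 by blast
    ultimately show "x \<in> (\<Union>n. {- real n<..0})"
      by (auto intro!: exI[of _ n])
  qed auto
  finally show ?thesis
    by (rule AE_I') auto
qed

section \<open>The function \<open>1/\<phi>\<close>\<close>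

definition recip_on01 :: "(real \<Rightarrow> real) \<Rightarrow> real \<Rightarrow> real" where
  "recip_on01 \<phi> s = (if 0 < s \<and> s \<le> 1 then 1 / \<phi> s else 0)"

lemma borel_measurable_recip_on01:
  assumes G: "classG \<phi>"
  shows "recip_on01 \<phi> \<in> borel_measurable borel"
proof -
  define \<phi>' where "\<phi>' s = (if s \<le> 0 then 0 else if s \<le> 1 then \<phi> s else \<phi> 1)" for s
  have "mono \<phi>'"
    unfolding \<phi>'_def using classG_pos[OF G] classG_mono[OF G]
    by (intro monoI) (auto intro: less_imp_le)
  then have [measurable]: "\<phi>' \<in> borel_measurable borel"
    by (rule borel_measurable_mono)
  have "(\<lambda>s. if s \<in> {0<..1} then 1 / \<phi>' s else 0) \<in> borel_measurable borel"
    by measurable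
  also have "(\<lambda>s. if s \<in> {0<..1} then 1 / \<phi>' s else 0) = recip_on01 \<phi>"
    by (auto simp: recip_on01_def \<phi>'_def)
  finally show ?thesis .
qed

lemma meas01_recip_on01: "classG \<phi> \<Longrightarrow> meas01 (recip_on01 \<phi>)"
  unfolding meas01_def
  by (intro measurable_restrict_space1 measurable_completion) (simp add: borel_measurable_recip_on01)

lemma rearr_recip_on01_ge:
  assumes G: "classG \<phi>" and u: "0 < u" "u \<le> 1"
  shows "ennreal (1 / \<phi> u) \<le> rearr (recip_on01 \<phi>) u"
proof (rule rearr_ge[OF u(1)])
  fix r assume r: "r < ennreal (1 / \<phi> u)"
  have "{0<..u} \<subseteq> {s \<in> {0..1}. r < ennreal \<bar>recip_on01 \<phi> s\<bar>}"
  proof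
    fix s assume s: "s \<in> {0<..u}"
    then have "1 / \<phi> u \<le> 1 / \<phi> s"
      using u classG_pos[OF G, of s] classG_mono[OF G, of s u] by (auto intro: frac_le)
    then show "s \<in> {s \<in> {0..1}. r < ennreal \<bar>recip_on01 \<phi> s\<bar>}"
      using r s u classG_pos[OF G, of s]
      by (auto simp: recip_on01_def intro: order.strict_trans2 ennreal_leI)
  qed
  then have "emeasure lebesgue {0<..u} \<le> distr_fun (recip_on01 \<phi>) r"
    unfolding distr_fun_def by (intro emeasure_mono meas01_level_set meas01_recip_on01 G)
  then show "ennreal u \<le> distr_fun (recip_on01 \<phi>) r"
    using u by simp
qed

text \<open>The factor \<open>2\<close> avoids the left-continuity of \<open>x\<^sup>*\<close>: the level set of \<open>1 / \<phi>\<close> above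
  \<open>1 / \<phi>(u/2)\<close> lies in \<open>[0, u/2]\<close>, and \<open>\<phi> u \<le> 2 \<phi>(u/2)\<close> by concavity.\<close>
lemma rearr_recip_on01_le:
  assumes G: "classG \<phi>" and u: "0 < u" "u \<le> 1"
  shows "rearr (recip_on01 \<phi>) u \<le> ennreal (2 / \<phi> u)"
proof -
  have pos: "0 < \<phi> u" "0 < \<phi> (u / 2)"
    using u by (auto intro: classG_pos[OF G])
  have "{s \<in> {0..1}. ennreal (1 / \<phi> (u / 2)) < ennreal \<bar>recip_on01 \<phi> s\<bar>} \<subseteq> {0..u / 2}"
  proof (intro subsetI CollectI)
    fix s assume s: "s \<in> {s \<in> {0..1}. ennreal (1 / \<phi> (u / 2)) < ennreal \<bar>recip_on01 \<phi> s\<bar>}"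
    show "s \<in> {0..u / 2}"
    proof (rule ccontr)
      assume "s \<notin> {0..u / 2}"
      then have s': "u / 2 < s" "s \<le> 1"
        using s by auto
      then have "1 / \<phi> s \<le> 1 / \<phi> (u / 2)"
        using u pos classG_mono[OF G, of "u / 2" s] by (intro frac_le) auto
      then have "ennreal \<bar>recip_on01 \<phi> s\<bar> \<le> ennreal (1 / \<phi> (u / 2))"
        using s' u classG_pos[OF G, of s] by (intro ennreal_leI) (simp add: recip_on01_def)
      then show False
        using s by (simp add: not_less[symmetric])
    qed
  qed
  then have "distr_fun (recip_on01 \<phi>) (ennreal (1 / \<phi> (u / 2))) \<le> emeasure lebesgue {0..u / 2}"
    unfolding distr_fun_def by (intro emeasure_mono) auto
  also have "\<dots> < ennreal u"
    using u by (simp add: ennreal_lessI)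
  finally have "rearr (recip_on01 \<phi>) u \<le> ennreal (1 / \<phi> (u / 2))"
    by (rule rearr_le[OF u(1)])
  also have "\<dots> \<le> ennreal (2 / \<phi> u)"
  proof (rule ennreal_leI)
    have "(u / 2) * \<phi> u \<le> u * \<phi> (u / 2)"
      using u by (intro classG_mult_le_mult[OF G]) auto
    then show "1 / \<phi> (u / 2) \<le> 2 / \<phi> u"
      using pos u by (simp add: field_simps)
  qed
  finally show ?thesis .
qed

text \<open>This is where \<open>\<delta>\<^sub>\<phi> < 1\<close> enters: \<open>1/\<phi>(s) \<le> C (t/s)\<^sup>p / \<phi>(t)\<close> with \<open>p < 1\<close> makes
  \<open>\<integral>\<^sub>0\<^sup>t 1/\<phi> \<le> C t / ((1 - p) \<phi>(t))\<close>.\<close>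
lemma marc_norm_recip_on01_finite:
  assumes G: "classG \<phi>" and idx: "upper_dil_index \<phi> < 1"
  shows "marc_norm \<phi> (recip_on01 \<phi>) < \<infinity>"
proof -
  obtain C p where C: "0 < C" and p: "0 \<le> p" "p < 1"
    and growth: "\<And>s t. 0 < s \<Longrightarrow> s \<le> t \<Longrightarrow> t \<le> 1 \<Longrightarrow> \<phi> t \<le> C * (t / s) powr p * \<phi> s"
    using classG_powr_growth[OF G idx] by blast
  have "ennreal (1 / tilde \<phi> t) * (\<integral>\<^sup>+ s\<in>{0..t}. rearr (recip_on01 \<phi>) s \<partial>lborel)
      \<le> ennreal (2 * C / (1 - p))" if t: "0 < t" "t \<le> 1" for t
  proof -
    have pt: "0 < \<phi> t"
      using classG_pos[OF G t] .
    define A where "A = 2 * C * t powr p / \<phi> t"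
    have A: "0 \<le> A"
      using pt C by (simp add: A_def)
    have pointwise: "rearr (recip_on01 \<phi>) s * indicator {0..t} s
        \<le> ennreal A * (ennreal (s powr (-p)) * indicator {0..t} s)" if "s \<noteq> 0" for s
    proof (cases "s \<in> {0..t}")
      case True
      then have s: "0 < s" "s \<le> t"
        using \<open>s \<noteq> 0\<close> by auto
      have "\<phi> t \<le> C * (t / s) powr p * \<phi> s"
        using s t by (intro growth) auto
      then have "2 / \<phi> s \<le> A * s powr (-p)"
        using s pt classG_pos[OF G, of s] t
        by (simp add: A_def powr_divide powr_minus_divide field_simps)
      then have "rearr (recip_on01 \<phi>) s \<le> ennreal (A * s powr (-p))"
        using rearr_recip_on01_le[OF G, of s] s t by (meson ennreal_leI order_trans)
      then show ?thesis
        using True A by (simp add: ennreal_mult)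
    qed simp
    have "(\<integral>\<^sup>+ s\<in>{0..t}. rearr (recip_on01 \<phi>) s \<partial>lborel)
        \<le> (\<integral>\<^sup>+ s. ennreal A * (ennreal (s powr (-p)) * indicator {0..t} s) \<partial>lborel)"
      using AE_lborel_singleton[of 0] pointwise by (intro nn_integral_mono_AE) (auto elim!: AE_mp)
    also have "\<dots> = ennreal A * (\<integral>\<^sup>+ s. ennreal (s powr (-p)) * indicator {0..t} s \<partial>lborel)"
      by (rule nn_integral_cmult) measurable
    also have "(\<integral>\<^sup>+ s. ennreal (s powr (-p)) * indicator {0..t} s \<partial>lborel)
        = ennreal (t powr (-p + 1) / (-p + 1))"
      using p t by (intro nn_integral_has_integral_lebesgue' has_integral_powr_from_0) auto
    finally have "ennreal (1 / tilde \<phi> t) * (\<integral>\<^sup>+ s\<in>{0..t}. rearr (recip_on01 \<phi>) s \<partial>lborel)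
        \<le> ennreal (1 / tilde \<phi> t) * (ennreal A * ennreal (t powr (-p + 1) / (-p + 1)))"
      by (intro mult_left_mono) simp_all
    also have "\<dots> = ennreal (1 / tilde \<phi> t * (A * (t powr (-p + 1) / (-p + 1))))"
    proof -
      have "0 \<le> t powr (-p + 1) / (-p + 1)" "0 \<le> 1 / tilde \<phi> t"
        using p t pt by (simp_all add: tilde_def)
      then show ?thesis
        using A by (simp only: ennreal_mult mult_nonneg_nonneg)
    qed
    also have "1 / tilde \<phi> t * (A * (t powr (-p + 1) / (-p + 1))) = 2 * C / (1 - p)"
    proof -
      have "t powr p * t powr (-p + 1) = t"
        using t by (simp flip: powr_add)
      then show ?thesis
        using t pt p by (simp add: tilde_def A_def field_simps)
    qed
    finally show ?thesis .
  qed
  then have "marc_norm \<phi> (recip_on01 \<phi>) \<le> ennreal (2 * C / (1 - p))"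
    unfolding marc_norm_def by (intro SUP_least) auto
  then show ?thesis
    by (simp add: order_le_less_trans)
qed

definition tail_integral :: "(real \<Rightarrow> real) \<Rightarrow> (real \<Rightarrow> real) \<Rightarrow> real \<Rightarrow> ennreal" where
  "tail_integral \<phi> \<psi> m =
    (\<integral>\<^sup>+ u. indicator {0<..m} u * ennreal (recip_on01 \<phi> u) \<partial>interval_measure (stieltjes_fun \<psi>))"

lemma tail_integral_1_le_lorentz_norm:
  assumes G: "classG \<phi>"
  shows "tail_integral \<phi> \<psi> 1 \<le> lorentz_norm \<psi> (recip_on01 \<phi>)"
  unfolding tail_integral_def lorentz_norm_def
proof (rule nn_integral_mono)
  fix u
  show "indicator {0<..1} u * ennreal (recip_on01 \<phi> u) \<le> rearr (recip_on01 \<phi>) u"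
  proof (cases "u \<in> {0<..1}")
    case True
    then show ?thesis
      using rearr_recip_on01_ge[OF G, of u] by (simp add: recip_on01_def)
  qed simp
qed

lemma tail_integral_small:
  assumes G: "classG \<phi>" and fin: "tail_integral \<phi> \<psi> 1 < \<infinity>" and c: "0 < c"
  obtains m where "0 < m" "m \<le> 1" "tail_integral \<phi> \<psi> m < ennreal c"
proof -
  let ?M = "interval_measure (stieltjes_fun \<psi>)"
  define g where "g m u = indicator {0<..m} u * ennreal (recip_on01 \<phi> u)" for m u :: real
  define f where "f k = g (1 / Suc k)" for k :: nat
  have g_mono: "g m u \<le> g m' u" if "m \<le> m'" for m m' u
    using that by (auto simp: g_def indicator_def)
  have tail_g: "tail_integral \<phi> \<psi> m = integral\<^sup>N ?M (g m)" for m
    by (simp add: g_def[abs_def] tail_integral_def)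
  have dec: "decseq f"
    unfolding f_def by (intro decseq_SucI le_funI g_mono) (simp add: frac_le)
  have [measurable]: "recip_on01 \<phi> \<in> borel_measurable borel"
    by (rule borel_measurable_recip_on01[OF G])
  then have meas: "f k \<in> borel_measurable ?M" for k
    unfolding f_def g_def[abs_def] by (simp add: measurable_cong_sets[OF sets_interval_measure refl])
  have "integral\<^sup>N ?M (f k) \<le> tail_integral \<phi> \<psi> 1" for k
    unfolding f_def tail_g by (intro nn_integral_mono g_mono) simp
  then have finite: "integral\<^sup>N ?M (f k) < \<infinity>" for k
    using fin by (rule order.strict_trans1)
  have INF_f: "(INF k. f k u) = 0" for u
  proof -
    obtain k where "u \<le> 0 \<or> inverse (real (Suc k)) < u"
      using reals_Archimedean by (metis not_le)
    then have "f k u = 0"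
      by (auto simp: f_def g_def indicator_def field_simps)
    then show ?thesis
      by (metis INF_lower UNIV_I le_zero_eq)
  qed
  have "(INF k. integral\<^sup>N ?M (f k)) = (\<integral>\<^sup>+ u. (INF k. f k u) \<partial>?M)"
    by (rule nn_integral_monotone_convergence_INF_decseq[symmetric, OF dec meas finite])
  also have "\<dots> = 0"
    using INF_f by simp
  finally have "(INF k. integral\<^sup>N ?M (f k)) < ennreal c"
    using c by simp
  then obtain k where "tail_integral \<phi> \<psi> (1 / Suc k) < ennreal c"
    by (auto simp: INF_less_iff f_def tail_g)
  with that[of "1 / Suc k"] show thesis by simp
qed

lemma lorentz_norm_le_tail_integral:
  assumes G: "classG \<phi>" and H: "classG \<psi>" and lim: "(\<psi> \<longlongrightarrow> 0) (at_right 0)"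
    and m: "0 < m" "m \<le> 1" and supp: "distr_fun x 0 < ennreal m"
  shows "lorentz_norm \<psi> x \<le> marc_norm \<phi> x * tail_integral \<phi> \<psi> m"
proof -
  let ?M = "interval_measure (stieltjes_fun \<psi>)"
  have "AE u in ?M. rearr x u \<le> marc_norm \<phi> x * (indicator {0<..m} u * ennreal (recip_on01 \<phi> u))"
    using AE_stieltjes_pos[OF H lim]
  proof (rule AE_mp, intro AE_I2 impI)
    fix u :: real assume u: "0 < u"
    show "rearr x u \<le> marc_norm \<phi> x * (indicator {0<..m} u * ennreal (recip_on01 \<phi> u))"
    proof (cases "u \<le> m")
      case True
      then have "indicator {0<..m} u * ennreal (recip_on01 \<phi> u) = ennreal (1 / \<phi> u)"
        using u m by (simp add: recip_on01_def)
      moreover have "rearr x u \<le> marc_norm \<phi> x * ennreal (1 / \<phi> u)"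
        using True m by (intro rearr_le_marc_norm[OF G u]) simp
      ultimately show ?thesis by simp
    next
      case False
      then have "ennreal m \<le> ennreal u"
        by (intro ennreal_leI) simp
      then have "distr_fun x 0 < ennreal u"
        using supp by (rule order.strict_trans2[rotated])
      then have "rearr x u \<le> 0"
        by (rule rearr_le[OF u])
      then show ?thesis by simp
    qed
  qed
  then have "lorentz_norm \<psi> x
      \<le> (\<integral>\<^sup>+ u. marc_norm \<phi> x * (indicator {0<..m} u * ennreal (recip_on01 \<phi> u)) \<partial>?M)"
    unfolding lorentz_norm_def by (rule nn_integral_mono_AE)
  also have "\<dots> = marc_norm \<phi> x * tail_integral \<phi> \<psi> m"
    unfolding tail_integral_def using borel_measurable_recip_on01[OF G]
    by (intro nn_integral_cmult) (simp add: measurable_cong_sets[OF sets_interval_measure refl])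
  finally show ?thesis .
qed

section \<open>Disjoint sequences\<close>

lemma AE_disjoint_family_small_member:
  fixes S :: "nat \<Rightarrow> 'a set"
  assumes S: "\<And>n. S n \<in> sets M" "\<And>n. S n \<subseteq> A" and A: "A \<in> fmeasurable M"
    and null: "\<And>n m. n \<noteq> m \<Longrightarrow> emeasure M (S n \<inter> S m) = 0" and e: "0 < e"
  obtains n where "emeasure M (S n) < ennreal e"
proof (rule ccontr)
  assume "\<not> thesis"
  have fS: "S n \<in> fmeasurable M" for n
    by (rule fmeasurableI2[OF A S(2) S(1)])
  have "\<not> emeasure M (S n) < ennreal e" for n
    using that \<open>\<not> thesis\<close> by blast
  then have big: "e \<le> measure M (S n)" for n
    using e by (simp add: emeasure_eq_measure2[OF fS] not_less)
  have "pairwise (\<lambda>i j. AE x in M. x \<notin> S i \<or> x \<notin> S j) {..<N}" for N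
    unfolding pairwise_def
  proof (intro ballI impI)
    fix i j :: nat assume "i \<noteq> j"
    then have "S i \<inter> S j \<in> null_sets M"
      using null S by (simp add: null_sets_def)
    then show "AE x in M. x \<notin> S i \<or> x \<notin> S j"
      by (rule AE_I') auto
  qed
  then have sum: "measure M (\<Union>n<N. S n) = (\<Sum>n<N. measure M (S n))" for N
    using fS by (intro measure_UNION_AE) auto
  obtain N :: nat where N: "measure M A / e < real N"
    using reals_Archimedean2 by blast
  have "real N * e \<le> (\<Sum>n<N. measure M (S n))"
    using sum_mono[of "{..<N}" "\<lambda>_. e", OF big] by simp
  also have "\<dots> \<le> measure M A"
    unfolding sum[symmetric] using S A by (intro measure_mono_fmeasurable) auto
  finally show False
    using N e by (simp add: field_simps)
qed

lemma disjoint01_small_support: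
  fixes xs :: "nat \<Rightarrow> real \<Rightarrow> real"
  assumes meas: "\<And>n. meas01 (xs n)"
    and disj: "\<And>n m. n \<noteq> m \<Longrightarrow> disjoint01 (xs n) (xs m)" and e: "0 < e"
  obtains n where "distr_fun (xs n) 0 < ennreal e"
proof -
  define S where "S n = {s \<in> {0..1}. xs n s \<noteq> 0}" for n
  have sets: "S n \<in> sets lebesgue" for n
    using meas01_level_set[OF meas[of n], of 0] by (simp add: S_def)
  have sub: "S n \<subseteq> {0..1}" for n
    by (auto simp: S_def)
  have null: "emeasure lebesgue (S n \<inter> S m) = 0" if "n \<noteq> m" for n m
  proof -
    have "S n \<inter> S m = {s \<in> {0..1}. xs n s \<noteq> 0 \<and> xs m s \<noteq> 0}"
      by (auto simp: S_def)
    with disj[OF that] show ?thesis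
      by (simp add: disjoint01_def)
  qed
  have "{0..1::real} \<in> fmeasurable lebesgue"
    by (simp add: fmeasurableI)
  then obtain n where "emeasure lebesgue (S n) < ennreal e"
    by (rule AE_disjoint_family_small_member[OF sets sub _ null e])
  moreover have "distr_fun (xs n) 0 = emeasure lebesgue (S n)"
    unfolding distr_fun_def S_def by simp
  ultimately show thesis
    using that[of n] by simp
qed

lemma closed_span_marc_generator:
  assumes "in_marc \<phi> (xs n)"
  shows "xs n \<in> closed_span_marc \<phi> xs"
proof -
  have "(\<Sum>i<Suc n. (if i = n then 1 else 0) * xs i s) = xs n s" for s
    by (simp add: if_distrib sum.delta)
  then have "marc_norm \<phi> (\<lambda>s. xs n s - (\<Sum>i<Suc n. (if i = n then 1 else 0) * xs i s)) < ennreal e"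
    if "0 < e" for e
    using that by (simp add: marc_norm_zero)
  then have "\<forall>e>0. \<exists>N (a :: nat \<Rightarrow> real). marc_norm \<phi> (\<lambda>s. xs n s - (\<Sum>i<N. a i * xs i s)) < ennreal e"
    by (intro allI impI exI[of _ "Suc n"] exI[of _ "\<lambda>i. if i = n then 1 else 0"])
  with assms show ?thesis
    unfolding closed_span_marc_def by simp
qed

theorem theorem4:
  fixes \<phi> \<psi> :: "real \<Rightarrow> real"
  assumes "classG \<phi>" and "classG \<psi>"
    and "((\<lambda>t. \<psi> t / \<phi> t) \<longlongrightarrow> 0) (at_right 0)"
    and "upper_dil_index \<phi> < 1"
    and "\<forall>x. in_marc \<phi> x \<longrightarrow> in_lorentz \<psi> x"
  shows "incl_DSS \<phi> \<psi>"
  unfolding incl_DSS_def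
proof (intro notI, elim exE conjE)
  note G = assms(1) and H = assms(2)
  fix xs :: "nat \<Rightarrow> real \<Rightarrow> real"
  assume xs: "\<forall>n. in_marc \<phi> (xs n) \<and> nonzero01 (xs n)"
    and disj: "\<forall>n m. n \<noteq> m \<longrightarrow> disjoint01 (xs n) (xs m)"
    and iso: "incl_iso_on \<phi> \<psi> (closed_span_marc \<phi> xs)"
  obtain c where c: "0 < c"
    and lower: "\<And>y. y \<in> closed_span_marc \<phi> xs \<Longrightarrow> ennreal c * marc_norm \<phi> y \<le> lorentz_norm \<psi> y"
    using iso unfolding incl_iso_on_def by blast
  have "in_marc \<phi> (recip_on01 \<phi>)"
    using meas01_recip_on01[OF G] marc_norm_recip_on01_finite[OF G assms(4)] by (simp add: in_marc_def)
  then have "tail_integral \<phi> \<psi> 1 < \<infinity>"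
    using assms(5) tail_integral_1_le_lorentz_norm[OF G] by (auto simp: in_lorentz_def intro: order.strict_trans1)
  then obtain m where m: "0 < m" "m \<le> 1" "tail_integral \<phi> \<psi> m < ennreal c"
    using tail_integral_small[OF G _ c] by blast
  obtain n where supp: "distr_fun (xs n) 0 < ennreal m"
    using disjoint01_small_support[of xs m] xs disj m(1) by (auto simp: in_marc_def)
  let ?K = "marc_norm \<phi> (xs n)"
  have K: "0 < ?K" "?K < \<infinity>"
    using marc_norm_pos[OF G] xs by (auto simp: in_marc_def)
  have "lorentz_norm \<psi> (xs n) \<le> ?K * tail_integral \<phi> \<psi> m"
    using lorentz_norm_le_tail_integral[OF G H classG_tendsto_0[OF G H assms(3)] m(1,2) supp] .
  also have "\<dots> < ?K * ennreal c"
    using K m(3) by (intro ennreal_mult_strict_left_mono) auto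
  also have "\<dots> \<le> lorentz_norm \<psi> (xs n)"
    using lower[OF closed_span_marc_generator] xs by (simp add: mult.commute)
  finally show False by simp
qed

end
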